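(* Assume (B1)–(B4) and consider the NL-IAPIAL method described in the context, with its cycles $\mathcal C_l$ and values $\tilde c_l$. Let $$\phi^*:=\inf\{\phi(z):g(z)\preceq_{\mathcal K}0\},\qquad \phi_*:=\inf_{z\in\mathbb{R}^n}\phi(z),\qquad R_\phi:=\phi^*-\phi_*+\frac{D_h^2}{\lambda},$$ and let $C_0:=\max\{\|p_0\|,\kappa_0\}/(\min\{1,\bar d\}\tau)$ with $\kappa_0$ and $\bar d$ as in the context. Then for every $l\ge1$ and every $k\in\mathcal C_l$ at which $p_k$ is computed, $$\mathcal L_{\tilde c_l}(z_k;p_k)\le R_\phi+\phi_*+\frac{4C_0^2}{\tilde c_l}.$$
   Context: $\mathcal K\subseteq\mathbb{R}^\ell$ is a nonempty closed convex cone, $\mathcal K^*=\{y:\langle y,x\rangle\ge0\ \forall x\in\mathcal K\}$ its dual cone, $u\preceq_{\mathcal K}v$ means $v-u\in\mathcal K$, $\Pi_S$ is the Euclidean projection onto a closed convex set $S$, $\mathrm{dist}(y,S)$ the Euclidean distance. $\partial_\varepsilon\varphi(z):=\{u:\varphi(z')\ge\varphi(z)+\langle u,z'-z\rangle-\varepsilon\ \forall z'\}$, $\partial=\partial_0$. For differentiable $g:\mathbb{R}^n\to\mathbb{R}^\ell$, $\nabla g(z)\in\mathbb{R}^{n\times\ell}$ is the transpose of the Jacobian. $g$ is $\mathcal K$-convex if $g(tz'+(1-t)z)-tg(z')-(1-t)g(z)\preceq_{\mathcal K}0$ for all $z,z'$, $t\in[0,1]$. (B1) $h:\mathbb{R}^n\to(-\infty,\infty]$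 proper lsc convex, $K_h$-Lipschitz on its domain; $\mathcal H:=\mathrm{dom}\,h$ compact with diameter $D_h$. (B2) $f$ differentiable on an open set containing $\mathcal H$; $m_f,L_f>0$ with $f(z')-f(z)-\langle\nabla f(z),z'-z\rangle\ge-\frac{m_f}{2}\|z'-z\|^2$ and $\|\nabla f(z')-\nabla f(z)\|\le L_f\|z'-z\|$ on $\mathcal H$. (B3) $g$ is $\mathcal K$-convex, differentiable, $\nabla g$ is $L_g$-Lipschitz on $\mathbb{R}^n$. (B4) there exist $\bar z\in\mathrm{int}\,\mathcal H$, $\tau\in(0,1]$ with $g(\bar z)\preceq_{\mathcal K}0$ and $\max\{\|\nabla g(z)p\|,|\langle p,g(\bar z)\rangle|\}\ge\tau\|p\|$ for all $z\in\mathcal H$, $p\in\mathcal K^*$. Constants: $B_f^{(1)}:=\sup_{\mathcal H}\|\nabla f\|$, $B_g^{(0)}:=\sup_{\mathcal H}\|g\|$, $B_g^{(1)}:=\sup_{\mathcal H}\|\nabla g\|$; $\bar d:=\mathrm{dist}(\bar z,\partial\mathcal H)$ ($\partial\mathcal H$ the boundary of $\mathcal H$); $\kappa_0:=2[K_h+B_f^{(1)}]D_h+[\frac{\sigma^2}{2(1-\sigma)^2}+2(\frac{1+\sigma}{1-\sigma})]\frac{D_h^2}{\lambda}$. Functions: $\phi=f+h$; $\mathcal L_c(z;p):=f(z)+h(z)+\frac1{2c}[\mathrm{dist}^2(p+cg(z),-\mathcal K)-\|p\|^2]$; $\widetilde{\mathcal L}_c(z;p):=\mathcal L_c(z;p)-h(z)$,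 with $\nabla_z\widetilde{\mathcal L}_c(z;p)=\nabla f(z)+\nabla g(z)\Pi_{\mathcal K^*}(p+cg(z))$; $\Lambda(c,p):=L_f+L_g\|p\|+c(B_g^{(0)}L_g+[B_g^{(1)}]^2)$. NL-IAPIAL method. Inputs: $\lambda\in(0,1/(2m_f)]$, $\sigma\in(0,1/\sqrt2]$, $c_1>0$, $(z_0,p_0)\in\mathcal H\times\mathbb{R}^\ell$, $(\hat\rho,\hat\eta)\in\mathbb{R}^2_{++}$. Set $\hat k=0$, $k=1$. Iteration $k$: (1) set $L^\psi_{k-1}:=\lambda\Lambda(c_k,p_{k-1})+1$, $\sigma_{k-1}:=\sigma/\sqrt{L^\psi_{k-1}}$, and obtain (by any procedure) $(z_k,v_k,\varepsilon_k)\in\mathbb{R}^n\times\mathbb{R}^n\times\mathbb{R}_+$ with $v_k\in\partial_{\varepsilon_k}(\lambda\mathcal L_{c_k}(\cdot;p_{k-1})+\frac12\|\cdot-z_{k-1}\|^2)(z_k)$ and $\|v_k\|^2+2\varepsilon_k\le\sigma_{k-1}^2\|v_k+z_{k-1}-z_k\|^2$. (2) Set $r_k:=v_k+z_{k-1}-z_k$, $\delta_k:=\varepsilon_k/\lambda$, $\hat z_k:=\mathrm{argmin}_u\{\lambda[\langle\nabla_z\widetilde{\mathcal L}_{c_k}(z_k;p_{k-1}),u-z_k\rangle+h(u)]-\langle r_k,u-z_k\rangle+\frac{L^\psi_{k-1}}2\|u-z_k\|^2\}$, $w_k:=\frac1\lambda[r_k+L^\psi_{k-1}(z_k-\hat z_k)]$,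 $\hat p_k:=\Pi_{\mathcal K^*}(p_{k-1}+c_kg(\hat z_k))$, $\hat q_k:=(p_{k-1}-\hat p_k)/c_k$, $\hat w_k:=w_k+\nabla_z\widetilde{\mathcal L}_{c_k}(\hat z_k;p_{k-1})-\nabla_z\widetilde{\mathcal L}_{c_k}(z_k;p_{k-1})$; if $\|\hat w_k\|\le\hat\rho$ and $\|\hat q_k\|\le\hat\eta$, stop. (3) $p_k:=\Pi_{\mathcal K^*}(p_{k-1}+c_kg(z_k))$. (4) If $k>\hat k+1$ and $\Delta_k:=\frac{1}{k-\hat k-1}[\mathcal L_{c_k}(z_{\hat k+1};p_{\hat k+1})-\mathcal L_{c_k}(z_k;p_k)]\le\frac{\lambda(1-\sigma^2)\hat\rho^2}{4(1+2\sigma)^2}$, set $c_{k+1}=2c_k$ and $\hat k=k$; otherwise $c_{k+1}=c_k$. (5) $k\leftarrow k+1$. Cycles: for $l\ge1$, $\tilde c_l:=2^{l-1}c_1$ and $\mathcal C_l:=\{k: c_k=\tilde c_l\}$ (over generated iterations $k$); $k_l$ is the largest index in $\mathcal C_l$ and $k_0:=0$, so $\mathcal C_l=\{k_{l-1}+1,\dots,k_l\}$ and the value of $\hat k$ during cycle $l$ is $k_{l-1}$. *)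

theory Defs
  imports "HOL-Analysis.Analysis"
begin

definition dual_cone :: "'a::real_inner set \<Rightarrow> 'a set" where
  "dual_cone K = {y. \<forall>x\<in>K. 0 \<le> inner y x}"

definition cone_le :: "'a::ab_group_add set \<Rightarrow> 'a \<Rightarrow> 'a \<Rightarrow> bool" where
  "cone_le K u v \<longleftrightarrow> v - u \<in> K"

definition K_convex :: "'l::real_vector set \<Rightarrow> ('n::real_vector \<Rightarrow> 'l) \<Rightarrow> bool" where
  "K_convex K g \<longleftrightarrow> (\<forall>z z' t. 0 \<le> t \<and> t \<le> 1 \<longrightarrow>
      cone_le K (g (t *\<^sub>R z' + (1 - t) *\<^sub>R z) - t *\<^sub>R g z' - (1 - t) *\<^sub>R g z) 0)"

text \<open>epsilon-subdifferential of the extended-valued function equal to phi on H and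
  +infinity outside H, at a point z of H (so only z' in H need to be tested).\<close>
definition eps_subdiff_on :: "'a::real_inner set \<Rightarrow> real \<Rightarrow> ('a \<Rightarrow> real) \<Rightarrow> 'a \<Rightarrow> 'a set" where
  "eps_subdiff_on H \<epsilon> \<phi> z = {u. \<forall>z'\<in>H. \<phi> z' \<ge> \<phi> z + inner u (z' - z) - \<epsilon>}"

definition aug_lagr :: "('n \<Rightarrow> real) \<Rightarrow> ('n \<Rightarrow> real) \<Rightarrow> ('n \<Rightarrow> 'l::real_normed_vector)
     \<Rightarrow> 'l set \<Rightarrow> real \<Rightarrow> 'n \<Rightarrow> 'l \<Rightarrow> real" where
  "aug_lagr f h g K c z p =
     f z + h z + (1 / (2 * c)) * ((infdist (p + c *\<^sub>R g z) (uminus ` K))\<^sup>2 - (norm p)\<^sup>2)"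

definition grad_tL :: "('n::euclidean_space \<Rightarrow> 'n) \<Rightarrow> ('n \<Rightarrow> 'l::euclidean_space)
     \<Rightarrow> ('n \<Rightarrow> 'n \<Rightarrow> 'l) \<Rightarrow> 'l set \<Rightarrow> real \<Rightarrow> 'n \<Rightarrow> 'l \<Rightarrow> 'n" where
  "grad_tL gradf g Jg K c z p =
     gradf z + adjoint (Jg z) (closest_point (dual_cone K) (p + c *\<^sub>R g z))"

definition Lam :: "real \<Rightarrow> real \<Rightarrow> real \<Rightarrow> real \<Rightarrow> real \<Rightarrow> 'l::real_normed_vector \<Rightarrow> real" where
  "Lam Lf Lg Bg0 Bg1 c p = Lf + Lg * norm p + c * (Bg0 * Lg + Bg1\<^sup>2)"

end

theory Submission
  imports Defs
begin

text \<open>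
  By Moreau's decomposition the distance from a to -K is the norm of the projection of a onto
  the dual cone, so the augmented Lagrangian equals f + h + (|P(p + c g)|^2 - |p|^2) / (2c), where
  P is that projection, and replacing p_{k-1} by p_k raises it by at most |p_k - p_{k-1}|^2 / c.
  Testing the inexact proximal optimality of z_k at a feasible point u bounds the value at p_{k-1}
  by phi(u) + D_h^2 / lambda, so it remains to bound all multipliers by C_0. Testing the same
  optimality along the segment from z_k towards an arbitrary u in H bounds the derivative of
  <p_k, g> at z_k in the direction z_k - u by kappa_0. If |p_k| > |p_{k-1}|, the projection
  forces <p_k, g(z_k)> \<ge> 0, and then the Slater point and the regularity condition (B4) give
  min(1, dbar) tau |p_k| \<le> kappa_0. Hence no multiplier exceeds C_0, and
  |p_k - p_{k-1}|^2 \<le> 4 C_0^2.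
\<close>

section \<open>Dual cones and projections onto them\<close>

lemma power2_norm_add:
  fixes x y :: "'a::real_inner"
  shows "(norm (x + y))\<^sup>2 = (norm x)\<^sup>2 + 2 * inner x y + (norm y)\<^sup>2"
  by (simp add: power2_norm_eq_inner inner_add_left inner_add_right inner_commute)

lemma closed_dual_cone: "closed (dual_cone K)"
proof -
  have "dual_cone K = (\<Inter>x\<in>K. {y. inner x y \<ge> 0})"
    by (auto simp: dual_cone_def inner_commute)
  then show ?thesis
    by (auto intro!: closed_INT closed_halfspace_ge)
qed

lemma convex_dual_cone: "convex (dual_cone K)"
  unfolding dual_cone_def convex_def
  by (auto simp: inner_add_left intro!: add_nonneg_nonneg mult_nonneg_nonneg)

lemma zero_in_dual_cone: "0 \<in> dual_cone K"
  by (simp add: dual_cone_def)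

lemma scaleR_in_dual_cone: "y \<in> dual_cone K \<Longrightarrow> 0 \<le> a \<Longrightarrow> a *\<^sub>R y \<in> dual_cone K"
  by (simp add: dual_cone_def)

lemma mem_cone_if_dual_cone_inner_nonneg:
  fixes K :: "'a::euclidean_space set"
  assumes "closed K" "convex_cone K" and dual: "\<And>y. y \<in> dual_cone K \<Longrightarrow> 0 \<le> inner y x"
  shows "x \<in> K"
proof (rule ccontr)
  assume "x \<notin> K"
  moreover have "convex K"
    using assms(2) by (simp add: convex_cone_def)
  ultimately obtain b a where ba: "inner b x < a" "\<forall>y\<in>K. a < inner b y"
    using separating_hyperplane_closed_point assms(1) by blast
  have "a < 0"
    using ba(2) convex_cone_contains_0[OF assms(2)] by force
  have "b \<in> dual_cone K"
    unfolding dual_cone_def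
  proof (intro CollectI ballI)
    fix y assume y: "y \<in> K"
    show "0 \<le> inner b y"
    proof (rule ccontr)
      assume neg: "\<not> 0 \<le> inner b y"
      \<comment> \<open>rescaling y inside the cone would reach the separating level a\<close>
      have "(a / inner b y) *\<^sub>R y \<in> K"
        using \<open>a < 0\<close> neg y by (intro convex_cone_scaleR[OF assms(2)]) (auto simp: divide_nonpos_neg)
      with ba(2) neg show False
        by fastforce
    qed
  qed
  with dual ba(1) \<open>a < 0\<close> show False
    by force
qed

lemma closest_point_dual_cone:
  fixes K :: "'a::euclidean_space set" and a :: 'a
  assumes "closed K" "convex_cone K"
  defines "P \<equiv> closest_point (dual_cone K) a"
  shows "P \<in> dual_cone K" and "inner P (a - P) = 0" and "P - a \<in> K"
proof -
  have ne: "dual_cone K \<noteq> {}"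
    using zero_in_dual_cone by blast
  show P: "P \<in> dual_cone K"
    unfolding P_def by (rule closest_point_in_set[OF closed_dual_cone ne])
  have obtuse: "inner (a - P) (y - P) \<le> 0" if "y \<in> dual_cone K" for y
    unfolding P_def using closest_point_dot[OF convex_dual_cone closed_dual_cone that] .
  have "inner (a - P) (0 - P) \<le> 0" "inner (a - P) (2 *\<^sub>R P - P) \<le> 0"
    using obtuse[OF zero_in_dual_cone] obtuse[OF scaleR_in_dual_cone[OF P, of 2]] by auto
  then have orth: "inner (a - P) P = 0"
    by (simp add: inner_diff_right algebra_simps)
  then show "inner P (a - P) = 0"
    by (simp add: inner_commute)
  show "P - a \<in> K"
  proof (rule mem_cone_if_dual_cone_inner_nonneg[OF assms(1,2)])
    fix y assume "y \<in> dual_cone K"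
    then have "inner (a - P) y \<le> 0"
      using obtuse orth by (simp add: inner_diff_right)
    then show "0 \<le> inner y (P - a)"
      by (simp add: inner_commute inner_diff_left inner_diff_right)
  qed
qed

lemma closest_point_dual_cone_residual:
  fixes K :: "'a::euclidean_space set"
  assumes "closed K" "convex_cone K"
  shows "a - closest_point (dual_cone K) a \<in> uminus ` K"
proof -
  have "a - closest_point (dual_cone K) a = - (closest_point (dual_cone K) a - a)"
    by simp
  then show ?thesis
    using closest_point_dual_cone(3)[OF assms, of a] by blast
qed

lemma infdist_uminus_cone_eq_norm_closest_point:
  fixes K :: "'a::euclidean_space set"
  assumes "closed K" "convex_cone K"
  shows "infdist a (uminus ` K) = norm (closest_point (dual_cone K) a)"
proof -
  define P where "P = closest_point (dual_cone K) a"
  note P = closest_point_dual_cone[OF assms, of a, folded P_def]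
  have "a - P \<in> uminus ` K"
    unfolding P_def by (rule closest_point_dual_cone_residual[OF assms])
  then have le: "infdist a (uminus ` K) \<le> norm P"
    using infdist_le[of "a - P" "uminus ` K" a] by (simp add: dist_norm)
  have ge: "norm P \<le> dist a y" if y: "y \<in> uminus ` K" for y
  proof -
    obtain x where x: "x \<in> K" "y = - x"
      using y by blast
    have "0 \<le> inner P x"
      using P(1) x(1) by (simp add: dual_cone_def)
    \<comment> \<open>Pythagoras: P is orthogonal to a - P and makes an acute angle with x\<close>
    moreover have "(norm (P + ((a - P) + x)))\<^sup>2
        = (norm P)\<^sup>2 + 2 * (inner P (a - P) + inner P x) + (norm ((a - P) + x))\<^sup>2"
      by (simp only: power2_norm_add inner_add_right)
    ultimately have "(norm P)\<^sup>2 \<le> (norm (P + ((a - P) + x)))\<^sup>2"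
      using P(2) by simp
    then have "norm P \<le> norm (P + ((a - P) + x))"
      by (rule power2_le_imp_le) simp
    then show ?thesis
      using x by (simp add: dist_norm)
  qed
  have "uminus ` K \<noteq> {}"
    using convex_cone_nonempty[OF assms(2)] by simp
  then have "norm P \<le> infdist a (uminus ` K)"
    unfolding infdist_notempty[OF \<open>uminus ` K \<noteq> {}\<close>] using ge by (intro cINF_greatest) auto
  with le show ?thesis
    by (simp add: P_def)
qed

lemma norm_closest_point_dual_cone_le:
  fixes K :: "'a::euclidean_space set"
  assumes "closed K" "convex_cone K"
  shows "norm (closest_point (dual_cone K) a) \<le> norm a"
proof -
  define P where "P = closest_point (dual_cone K) a"
  have "(norm P)\<^sup>2 = inner P a"
    using closest_point_dual_cone(2)[OF assms, of a]
    by (simp add: P_def inner_diff_right power2_norm_eq_inner)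
  also have "\<dots> \<le> norm P * norm a"
    by (rule norm_cauchy_schwarz)
  finally show ?thesis
    by (cases "P = 0") (auto simp: P_def power2_eq_square)
qed

lemma inner_closest_point_dual_cone_nonneg:
  fixes K :: "'a::euclidean_space set"
  assumes "closed K" "convex_cone K" "0 < c"
    and "norm p < norm (closest_point (dual_cone K) (p + c *\<^sub>R w))"
  shows "0 \<le> inner (closest_point (dual_cone K) (p + c *\<^sub>R w)) w"
proof -
  define P where "P = closest_point (dual_cone K) (p + c *\<^sub>R w)"
  have "c * inner P w = inner P P - inner P p"
    using closest_point_dual_cone(2)[OF assms(1,2), of "p + c *\<^sub>R w"]
    by (simp add: P_def inner_diff_right inner_add_right)
  also have "\<dots> \<ge> norm P * (norm P - norm p)"
    using norm_cauchy_schwarz[of P p] by (simp add: dot_square_norm power2_eq_square algebra_simps)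
  finally have "norm P * (norm P - norm p) \<le> c * inner P w" .
  moreover have "0 < norm P"
    using assms(4) norm_ge_zero[of p] unfolding P_def by linarith
  then have "0 < norm P * (norm P - norm p)"
    using assms(4) by (simp add: P_def)
  ultimately have "0 < c * inner P w"
    by linarith
  then show ?thesis
    using assms(3) by (simp add: P_def zero_less_mult_iff)
qed

section \<open>The augmented Lagrangian\<close>

lemma aug_lagr_closest_point:
  fixes K :: "'l::euclidean_space set"
  assumes "closed K" "convex_cone K"
  shows "aug_lagr f h g K c z p =
    f z + h z + ((norm (closest_point (dual_cone K) (p + c *\<^sub>R g z)))\<^sup>2 - (norm p)\<^sup>2) / (2 * c)"
  by (simp add: aug_lagr_def infdist_uminus_cone_eq_norm_closest_point[OF assms])

lemma aug_lagr_le: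
  fixes K :: "'l::euclidean_space set"
  assumes "0 < c" "y \<in> uminus ` K"
  shows "aug_lagr f h g K c z p \<le> f z + h z + ((norm (p + c *\<^sub>R g z - y))\<^sup>2 - (norm p)\<^sup>2) / (2 * c)"
proof -
  have "infdist (p + c *\<^sub>R g z) (uminus ` K) \<le> norm (p + c *\<^sub>R g z - y)"
    using infdist_le[OF assms(2)] by (simp add: dist_norm)
  then have "(infdist (p + c *\<^sub>R g z) (uminus ` K))\<^sup>2 \<le> (norm (p + c *\<^sub>R g z - y))\<^sup>2"
    by (simp add: power_mono infdist_nonneg)
  with assms(1) show ?thesis
    unfolding aug_lagr_def by (simp add: divide_right_mono)
qed

lemma aug_lagr_feasible_le:
  fixes K :: "'l::euclidean_space set"
  assumes "convex_cone K" "0 < c" "cone_le K (g u) 0"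
  shows "aug_lagr f h g K c u p \<le> f u + h u"
proof -
  have "0 - g u \<in> K"
    using assms(3) by (simp add: cone_le_def)
  then have "c *\<^sub>R (0 - g u) \<in> K"
    using assms(2) by (intro convex_cone_scaleR[OF assms(1)]) simp_all
  moreover have "c *\<^sub>R g u = - (c *\<^sub>R (0 - g u))"
    by simp
  ultimately have "c *\<^sub>R g u \<in> uminus ` K"
    by blast
  from aug_lagr_le[OF assms(2) this, of f h g u p] show ?thesis
    by simp
qed

lemma aug_lagr_multiplier_update_le:
  fixes g :: "'n \<Rightarrow> 'l::euclidean_space" and z :: 'n and p :: 'l
  assumes "closed K" "convex_cone K" "0 < c"
  defines "P \<equiv> closest_point (dual_cone K) (p + c *\<^sub>R g z)"
  shows "aug_lagr f h g K c z P \<le> aug_lagr f h g K c z p + (norm (P - p))\<^sup>2 / c"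
proof -
  have "p + c *\<^sub>R g z - P \<in> uminus ` K"
    unfolding P_def by (rule closest_point_dual_cone_residual[OF assms(1,2)])
  from aug_lagr_le[OF assms(3) this, of f h g z P]
  have "aug_lagr f h g K c z P \<le> f z + h z + ((norm (P + (P - p)))\<^sup>2 - (norm P)\<^sup>2) / (2 * c)"
    by (simp add: algebra_simps)
  \<comment> \<open>parallelogram identity\<close>
  also have "\<dots> = f z + h z + ((norm P)\<^sup>2 - (norm p)\<^sup>2) / (2 * c) + (norm (P - p))\<^sup>2 / c"
  proof -
    have "(norm p)\<^sup>2 = (norm P)\<^sup>2 - 2 * inner P (P - p) + (norm (P - p))\<^sup>2"
      by (simp add: power2_norm_eq_inner inner_diff_left inner_diff_right inner_commute)
    then show ?thesis
      using assms(3) unfolding power2_norm_add by (simp add: diff_divide_distrib add_divide_distrib)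
  qed
  finally show ?thesis
    by (simp add: aug_lagr_closest_point[OF assms(1,2)] P_def)
qed

lemma aug_lagr_diff_le:
  fixes g :: "'n \<Rightarrow> 'l::euclidean_space" and z :: 'n and p :: 'l
  assumes "closed K" "convex_cone K" "0 < c"
  defines "P \<equiv> closest_point (dual_cone K) (p + c *\<^sub>R g z)"
  shows "aug_lagr f h g K c z' p - aug_lagr f h g K c z p
    \<le> f z' + h z' - (f z + h z) + inner P (g z' - g z) + c / 2 * (norm (g z' - g z))\<^sup>2"
proof -
  have "p + c *\<^sub>R g z - P \<in> uminus ` K"
    unfolding P_def by (rule closest_point_dual_cone_residual[OF assms(1,2)])
  from aug_lagr_le[OF assms(3) this, of f h g z' p]
  have "aug_lagr f h g K c z' p \<le> f z' + h z' + ((norm (P + c *\<^sub>R (g z' - g z)))\<^sup>2 - (norm p)\<^sup>2) / (2 * c)"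
    by (simp add: algebra_simps)
  also have "\<dots> = f z' + h z' + ((norm P)\<^sup>2 - (norm p)\<^sup>2) / (2 * c)
      + inner P (g z' - g z) + c / 2 * (norm (g z' - g z))\<^sup>2"
    using assms(3) unfolding power2_norm_add
    by (simp add: power_mult_distrib diff_divide_distrib add_divide_distrib power2_eq_square)
  finally show ?thesis
    by (simp add: aug_lagr_closest_point[OF assms(1,2)] P_def)
qed

section \<open>First-order estimates\<close>

lemma has_real_derivative_inner_along_line:
  assumes "\<And>x. (g has_derivative Jg x) (at x)"
  shows "((\<lambda>s. inner q (g (z + s *\<^sub>R d))) has_real_derivative inner q (Jg (z + s *\<^sub>R d) d)) (at s)"
proof -
  have "((\<lambda>s. z + s *\<^sub>R d) has_derivative (\<lambda>s'. s' *\<^sub>R d)) (at s)"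
    by (auto intro!: derivative_eq_intros)
  from has_derivative_compose[OF this assms]
  have "((\<lambda>s. inner q (g (z + s *\<^sub>R d))) has_derivative (\<lambda>s'. inner q (Jg (z + s *\<^sub>R d) (s' *\<^sub>R d)))) (at s)"
    by (rule has_derivative_inner_right)
  moreover have "linear (Jg (z + s *\<^sub>R d))"
    using assms has_derivative_linear by blast
  ultimately show ?thesis
    by (simp add: has_field_derivative_def linear_scale mult_commute_abs)
qed

lemma inner_descent_lemma:
  assumes deriv: "\<And>x. (g has_derivative Jg x) (at x)"
    and lipschitz: "\<And>x y. onorm (\<lambda>d. Jg y d - Jg x d) \<le> Lg * norm (y - x)"
  shows "inner q (g (z + d)) - inner q (g z) \<le> inner q (Jg z d) + norm q * Lg * (norm d)\<^sup>2 / 2"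
proof -
  define Q where "Q s = inner q (g (z + s *\<^sub>R d))" for s
  define Q' where "Q' s = inner q (Jg (z + s *\<^sub>R d) d)" for s
  define a where "a = norm q * Lg * (norm d)\<^sup>2"
  have Q_deriv: "(Q has_real_derivative Q' s) (at s)" for s
    unfolding Q_def Q'_def by (rule has_real_derivative_inner_along_line[OF deriv])
  have Q'_le: "Q' s - Q' 0 \<le> a * s" if "0 \<le> s" for s
  proof -
    have "bounded_linear (\<lambda>e. Jg (z + s *\<^sub>R d) e - Jg z e)"
      using deriv by (intro bounded_linear_sub) (auto intro: has_derivative_bounded_linear)
    then have "norm (Jg (z + s *\<^sub>R d) d - Jg z d) \<le> onorm (\<lambda>e. Jg (z + s *\<^sub>R d) e - Jg z e) * norm d"
      by (rule onorm)
    also have "\<dots> \<le> Lg * norm (s *\<^sub>R d) * norm d"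
      using lipschitz[of "z + s *\<^sub>R d" z] by (simp add: mult_right_mono)
    finally have "norm (Jg (z + s *\<^sub>R d) d - Jg z d) \<le> Lg * norm (s *\<^sub>R d) * norm d" .
    then have "norm q * norm (Jg (z + s *\<^sub>R d) d - Jg z d) \<le> norm q * (Lg * norm (s *\<^sub>R d) * norm d)"
      by (simp add: mult_left_mono)
    also have "\<dots> = a * s"
      using that by (simp add: a_def power2_eq_square)
    finally have "norm q * norm (Jg (z + s *\<^sub>R d) d - Jg z d) \<le> a * s" .
    moreover have "Q' s - Q' 0 \<le> norm q * norm (Jg (z + s *\<^sub>R d) d - Jg z d)"
      using Cauchy_Schwarz_ineq2[of q "Jg (z + s *\<^sub>R d) d - Jg z d"] by (simp add: Q'_def inner_diff_right)
    ultimately show ?thesis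
      by linarith
  qed
  define F where "F s = Q s - s * Q' 0 - a * s\<^sup>2 / 2" for s
  have "F 1 \<le> F 0"
  proof (rule DERIV_nonpos_imp_nonincreasing[of 0 1 F])
    fix s :: real assume "0 \<le> s" "s \<le> 1"
    have "(F has_real_derivative (Q' s - Q' 0 - a * s)) (at s)"
      unfolding F_def by (auto intro!: derivative_eq_intros Q_deriv simp: power2_eq_square)
    with Q'_le[OF \<open>0 \<le> s\<close>] show "\<exists>y. (F has_real_derivative y) (at s) \<and> y \<le> 0"
      by force
  qed simp
  then show ?thesis
    by (simp add: F_def Q_def Q'_def a_def)
qed

lemma K_convex_inner_le:
  assumes "K_convex K g" "p \<in> dual_cone K" "0 \<le> t" "t \<le> 1"
  shows "inner p (g (t *\<^sub>R u + (1 - t) *\<^sub>R z)) \<le> t * inner p (g u) + (1 - t) * inner p (g z)"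
proof -
  have "0 - (g (t *\<^sub>R u + (1 - t) *\<^sub>R z) - t *\<^sub>R g u - (1 - t) *\<^sub>R g z) \<in> K"
    using assms(1,3,4) unfolding K_convex_def cone_le_def by blast
  with assms(2) have "0 \<le> inner p (0 - (g (t *\<^sub>R u + (1 - t) *\<^sub>R z) - t *\<^sub>R g u - (1 - t) *\<^sub>R g z))"
    unfolding dual_cone_def by blast
  then show ?thesis
    by (simp add: inner_diff_right algebra_simps)
qed

lemma K_convex_gradient_inequality:
  assumes "K_convex K g" "p \<in> dual_cone K" and deriv: "\<And>x. (g has_derivative Jg x) (at x)"
  shows "inner p (Jg z (u - z)) \<le> inner p (g u) - inner p (g z)"
proof -
  define \<psi> where "\<psi> s = inner p (g (z + s *\<^sub>R (u - z)))" for s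
  have "convex_on UNIV \<psi>"
  proof (rule convex_onI[OF _ convex_UNIV])
    fix t s s' :: real assume "0 < t" "t < 1"
    have "z + ((1 - t) * s + t * s') *\<^sub>R (u - z)
        = t *\<^sub>R (z + s' *\<^sub>R (u - z)) + (1 - t) *\<^sub>R (z + s *\<^sub>R (u - z))"
      by (simp add: algebra_simps)
    then have "\<psi> ((1 - t) *\<^sub>R s + t *\<^sub>R s') \<le> t * \<psi> s' + (1 - t) * \<psi> s"
      unfolding \<psi>_def real_scaleR_def using K_convex_inner_le[OF assms(1,2)] \<open>0 < t\<close> \<open>t < 1\<close> by simp
    then show "\<psi> ((1 - t) *\<^sub>R s + t *\<^sub>R s') \<le> (1 - t) * \<psi> s + t * \<psi> s'"
      by simp
  qed
  moreover have "(\<psi> has_real_derivative inner p (Jg z (u - z))) (at 0 within UNIV)"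
    unfolding \<psi>_def[abs_def] using has_real_derivative_inner_along_line[OF deriv, of p z "u - z" 0] by simp
  ultimately have "inner p (Jg z (u - z)) * (1 - 0) \<le> \<psi> 1 - \<psi> 0"
    by (intro convex_on_imp_above_tangent) auto
  then show ?thesis
    by (simp add: \<psi>_def)
qed

lemma weakly_convex_interpolation:
  fixes f :: "'a::real_inner \<Rightarrow> real"
  assumes weak: "\<And>x y. x \<in> H \<Longrightarrow> y \<in> H \<Longrightarrow> f y - f x - inner (gradf x) (y - x) \<ge> - (m / 2) * (norm (y - x))\<^sup>2"
    and "convex H" "x \<in> H" "y \<in> H" "0 \<le> t" "t \<le> 1"
  shows "f ((1 - t) *\<^sub>R x + t *\<^sub>R y) \<le> (1 - t) * f x + t * f y + m * t * (1 - t) * (norm (y - x))\<^sup>2 / 2"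
proof -
  define w where "w = (1 - t) *\<^sub>R x + t *\<^sub>R y"
  define q where "q = inner (gradf w) (y - x)"
  have "w \<in> H"
    using convexD[OF assms(2-4)] assms(5,6) by (simp add: w_def)
  have "x - w = - t *\<^sub>R (y - x)" "y - w = (1 - t) *\<^sub>R (y - x)"
    by (simp_all add: w_def algebra_simps)
  then have x: "f x - f w + t * q \<ge> - (m / 2) * (t\<^sup>2 * (norm (y - x))\<^sup>2)"
    and y: "f y - f w - (1 - t) * q \<ge> - (m / 2) * ((1 - t)\<^sup>2 * (norm (y - x))\<^sup>2)"
    using weak[OF \<open>w \<in> H\<close> assms(3)] weak[OF \<open>w \<in> H\<close> assms(4)] assms(5,6)
    by (simp_all add: q_def power_mult_distrib)
  \<comment> \<open>the convex combination of the two tangent inequalities at w cancels the gradient terms\<close>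
  have "(1 - t) * (- (m / 2) * (t\<^sup>2 * (norm (y - x))\<^sup>2)) + t * (- (m / 2) * ((1 - t)\<^sup>2 * (norm (y - x))\<^sup>2))
      \<le> (1 - t) * (f x - f w + t * q) + t * (f y - f w - (1 - t) * q)"
    using assms(5,6) by (intro add_mono mult_left_mono x y) auto
  moreover have "(1 - t) * (f x - f w + t * q) + t * (f y - f w - (1 - t) * q)
      = (1 - t) * f x + t * f y - f w"
    by (simp add: algebra_simps)
  moreover have "(1 - t) * (- (m / 2) * (t\<^sup>2 * (norm (y - x))\<^sup>2)) + t * (- (m / 2) * ((1 - t)\<^sup>2 * (norm (y - x))\<^sup>2))
      = - (m * t * (1 - t) * (norm (y - x))\<^sup>2 / 2)"
    by (simp add: field_simps power2_eq_square)
  ultimately show ?thesis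
    unfolding w_def by linarith
qed

lemma multiplier_bound_by_regularity:
  fixes g :: "'n::euclidean_space \<Rightarrow> 'l::euclidean_space"
  assumes "K_convex K g" and deriv: "\<And>x. (g has_derivative Jg x) (at x)"
    and P: "P \<in> dual_cone K" "0 \<le> inner P (g z)"
    and slater: "cone_le K (g zbar) 0" "cball zbar s \<subseteq> H" "0 \<le> s" "s \<le> 1" "0 \<le> \<tau>"
    and regular: "\<tau> * norm P \<le> max (norm (adjoint (Jg z) P)) \<bar>inner P (g zbar)\<bar>"
    and bound: "\<And>u. u \<in> H \<Longrightarrow> inner (adjoint (Jg z) P) (z - u) \<le> M"
  shows "s * \<tau> * norm P \<le> M"
proof -
  define w where "w = adjoint (Jg z) P"
  have "linear (Jg z)"
    using deriv has_derivative_linear by blast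
  then have w: "inner w x = inner P (Jg z x)" for x
    using adjoint_works by (metis inner_commute w_def)
  have "- g zbar \<in> K"
    using slater(1) by (simp add: cone_le_def)
  with P(1) have "0 \<le> inner P (- g zbar)"
    unfolding dual_cone_def by blast
  moreover have "inner P (Jg z (zbar - z)) \<le> inner P (g zbar) - inner P (g z)"
    by (rule K_convex_gradient_inequality[OF assms(1) P(1) deriv])
  ultimately have slack: "\<bar>inner P (g zbar)\<bar> \<le> inner w (z - zbar)"
    using P(2) \<open>linear (Jg z)\<close> by (simp add: w linear_diff inner_diff_right)
  \<comment> \<open>test the bound at the point of the ball around the Slater point in direction -w\<close>
  define u where "u = zbar - s *\<^sub>R sgn w"
  have "u \<in> H"
    using slater(3) by (intro subsetD[OF slater(2)]) (simp add: u_def dist_norm norm_sgn)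
  have "inner w (sgn w) = norm w"
    by (cases "w = 0") (simp_all add: sgn_div_norm dot_square_norm power2_eq_square)
  then have "inner w (z - zbar) + s * norm w \<le> M"
    using bound[OF \<open>u \<in> H\<close>, folded w_def] by (simp add: u_def inner_diff_right inner_add_right algebra_simps)
  moreover have "s * max (norm w) \<bar>inner P (g zbar)\<bar> \<le> s * (norm w + \<bar>inner P (g zbar)\<bar>)"
    using slater(3) by (intro mult_left_mono) auto
  moreover have "s * (norm w + \<bar>inner P (g zbar)\<bar>) \<le> s * norm w + \<bar>inner P (g zbar)\<bar>"
    using slater(3,4) mult_left_le_one_le[of "\<bar>inner P (g zbar)\<bar>" s] by (simp add: distrib_left)
  moreover have "s * (\<tau> * norm P) \<le> s * max (norm w) \<bar>inner P (g zbar)\<bar>"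
    using regular slater(3) by (simp add: w_def mult_left_mono)
  ultimately show ?thesis
    using slack by simp
qed

section \<open>Inexact proximal points\<close>

lemma inexact_prox_error_bounds:
  fixes v w :: "'a::real_normed_vector"
  assumes "0 \<le> \<sigma>" "\<sigma> < 1" "1 \<le> L" "0 \<le> \<epsilon>"
    and err: "(norm v)\<^sup>2 + 2 * \<epsilon> \<le> (\<sigma> / sqrt L)\<^sup>2 * (norm (v + w))\<^sup>2"
  shows "(norm v)\<^sup>2 + 2 * \<epsilon> \<le> \<sigma>\<^sup>2 * (norm (v + w))\<^sup>2"
    and "2 * \<epsilon> * L \<le> \<sigma>\<^sup>2 * (norm (v + w))\<^sup>2"
    and "(1 - \<sigma>) * norm (v + w) \<le> norm w"
proof -
  have sq: "(\<sigma> / sqrt L)\<^sup>2 = \<sigma>\<^sup>2 / L"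
    using assms(3) by (simp add: power_divide)
  have "\<sigma>\<^sup>2 / L * (norm (v + w))\<^sup>2 \<le> \<sigma>\<^sup>2 * (norm (v + w))\<^sup>2"
    using assms(3) by (intro mult_right_mono) (simp_all add: divide_le_eq mult_le_cancel_left1)
  with err[unfolded sq] show err': "(norm v)\<^sup>2 + 2 * \<epsilon> \<le> \<sigma>\<^sup>2 * (norm (v + w))\<^sup>2"
    by linarith
  have "2 * \<epsilon> \<le> \<sigma>\<^sup>2 / L * (norm (v + w))\<^sup>2"
    using err[unfolded sq] zero_le_power2[of "norm v"] by linarith
  then show "2 * \<epsilon> * L \<le> \<sigma>\<^sup>2 * (norm (v + w))\<^sup>2"
    using assms(3) by (simp add: pos_le_divide_eq)
  have "(norm v)\<^sup>2 \<le> (\<sigma> * norm (v + w))\<^sup>2"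
    using err' assms(4) by (simp add: power_mult_distrib)
  then have "norm v \<le> \<sigma> * norm (v + w)"
    by (rule power2_le_imp_le) (use assms(1) in simp)
  moreover have "norm (v + w) \<le> norm v + norm w"
    by (rule norm_triangle_ineq)
  ultimately show "(1 - \<sigma>) * norm (v + w) \<le> norm w"
    by (simp add: algebra_simps)
qed

lemma eps_subdiff_prox_value_le:
  fixes \<Phi> :: "'a::real_inner \<Rightarrow> real"
  assumes v: "v \<in> eps_subdiff_on H \<epsilon> (\<lambda>x. \<Phi> x + (norm (x - y))\<^sup>2 / 2) z"
    and err: "(norm v)\<^sup>2 + 2 * \<epsilon> \<le> \<sigma>\<^sup>2 * (norm (v + y - z))\<^sup>2"
    and "\<sigma>\<^sup>2 \<le> 1 / 2" "0 \<le> \<epsilon>" "u \<in> H"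
  shows "\<Phi> z \<le> \<Phi> u + (norm (u - y))\<^sup>2"
proof -
  have "\<Phi> z + (norm (z - y))\<^sup>2 / 2 + inner v (u - z) - \<epsilon> \<le> \<Phi> u + (norm (u - y))\<^sup>2 / 2"
    using v \<open>u \<in> H\<close> unfolding eps_subdiff_on_def by blast
  \<comment> \<open>completing the square around the proximal centre y + v\<close>
  moreover have "(norm (u - y))\<^sup>2 / 2 - (norm (z - y))\<^sup>2 / 2 - inner v (u - z)
      = (norm ((u - y) - v))\<^sup>2 / 2 - (norm (v + y - z))\<^sup>2 / 2"
    by (simp add: power2_norm_eq_inner inner_diff_left inner_diff_right inner_add_left inner_add_right
        inner_commute field_simps)
  moreover have "(norm ((u - y) - v))\<^sup>2 \<le> 2 * (norm (u - y))\<^sup>2 + 2 * (norm v)\<^sup>2"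
  proof -
    have "(norm ((u - y) - v))\<^sup>2 = (norm (u - y))\<^sup>2 - 2 * inner (u - y) v + (norm v)\<^sup>2"
      using power2_norm_add[of "u - y" "- v"] by simp
    moreover have "0 \<le> (norm (u - y))\<^sup>2 + 2 * inner (u - y) v + (norm v)\<^sup>2"
      using power2_norm_add[of "u - y" v] zero_le_power2[of "norm (u - y + v)"] by simp
    ultimately show ?thesis
      by linarith
  qed
  moreover have "\<sigma>\<^sup>2 * (norm (v + y - z))\<^sup>2 \<le> (norm (v + y - z))\<^sup>2 / 2"
    using mult_right_mono[OF assms(3) zero_le_power2[of "norm (v + y - z)"]] by simp
  ultimately show ?thesis
    using err assms(4) by linarith
qed

lemma eps_subdiff_prox_decrease:
  fixes \<Phi> :: "'a::real_inner \<Rightarrow> real"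
  assumes "v \<in> eps_subdiff_on H \<epsilon> (\<lambda>x. \<Phi> x + (norm (x - y))\<^sup>2 / 2) z" "z + t *\<^sub>R d \<in> H"
  shows "\<Phi> z - \<Phi> (z + t *\<^sub>R d) \<le> t * inner (z - y - v) d + t\<^sup>2 * (norm d)\<^sup>2 / 2 + \<epsilon>"
proof -
  have "\<Phi> z + (norm (z - y))\<^sup>2 / 2 + inner v ((z + t *\<^sub>R d) - z) - \<epsilon>
      \<le> \<Phi> (z + t *\<^sub>R d) + (norm (z + t *\<^sub>R d - y))\<^sup>2 / 2"
    using assms unfolding eps_subdiff_on_def by blast
  moreover have "inner v ((z + t *\<^sub>R d) - z) = t * inner v d"
    by simp
  moreover have "(norm (z + t *\<^sub>R d - y))\<^sup>2 = (norm (z - y))\<^sup>2 + 2 * (t * inner (z - y) d) + t\<^sup>2 * (norm d)\<^sup>2"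
    using power2_norm_add[of "z - y" "t *\<^sub>R d"] by (simp add: power_mult_distrib algebra_simps)
  moreover have "t * inner (z - y - v) d = t * inner (z - y) d - t * inner v d"
    by (simp add: inner_diff_left right_diff_distrib)
  ultimately show ?thesis
    by linarith
qed

section \<open>Constants of the problem data\<close>

lemma cball_infdist_frontier_subset:
  fixes H :: "'a::euclidean_space set"
  assumes "closed H" "bounded H" "x \<in> interior H"
  shows "0 < infdist x (frontier H)" "cball x (infdist x (frontier H)) \<subseteq> H"
proof -
  define e where "e = infdist x (frontier H)"
  have "x \<in> H"
    using assms(3) interior_subset by blast
  moreover have "H \<noteq> UNIV"
    using assms(2) not_bounded_UNIV by blast
  ultimately have "frontier H \<noteq> {}"
    using frontier_not_empty by blast
  moreover have "x \<notin> frontier H"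
    using assms(3) by (simp add: frontier_def)
  ultimately show pos: "0 < e"
    unfolding e_def using infdist_pos_not_in_closed[OF frontier_closed] by blast
  have "ball x e \<subseteq> H"
  proof (rule ccontr)
    assume "\<not> ball x e \<subseteq> H"
    moreover have "x \<in> ball x e \<inter> H"
      using pos \<open>x \<in> H\<close> by simp
    ultimately obtain y where "y \<in> ball x e" "y \<in> frontier H"
      using connected_Int_frontier[OF connected_ball, of x e H] by blast
    then show False
      using infdist_le[of y "frontier H" x] by (simp add: e_def)
  qed
  then have "closure (ball x e) \<subseteq> H"
    using assms(1) by (rule closure_minimal)
  then show "cball x e \<subseteq> H"
    using pos by simp
qed

lemma le_SUP_if_lipschitz_on:
  fixes F :: "'a::metric_space \<Rightarrow> real"
  assumes "bounded S" "x0 \<in> S" "\<And>x. x \<in> S \<Longrightarrow> F x \<le> F x0 + L * dist x x0" "x \<in> S"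
  shows "F x \<le> (SUP y\<in>S. F y)"
proof -
  obtain B where B: "\<And>y. y \<in> S \<Longrightarrow> dist x0 y \<le> B"
    using bounded_any_center assms(1) by blast
  have "F y \<le> F x0 + \<bar>L\<bar> * B" if "y \<in> S" for y
  proof -
    have "L * dist y x0 \<le> \<bar>L\<bar> * B"
      using B[OF that] by (metis abs_ge_self abs_ge_zero dist_commute mult_mono order_trans zero_le_dist)
    then show ?thesis
      using assms(3)[OF that] by linarith
  qed
  then have "bdd_above (F ` S)"
    by (intro bdd_aboveI2)
  then show ?thesis
    using assms(4) by (rule cSUP_upper2) simp
qed

lemma norm_le_SUP_if_lipschitz_on:
  fixes G :: "'a::metric_space \<Rightarrow> 'b::real_normed_vector"
  assumes "bounded S" "x0 \<in> S" "\<And>x. x \<in> S \<Longrightarrow> norm (G x - G x0) \<le> L * dist x x0" "x \<in> S"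
  shows "norm (G x) \<le> (SUP y\<in>S. norm (G y))"
proof (rule le_SUP_if_lipschitz_on[OF assms(1,2) _ assms(4)])
  fix y assume "y \<in> S"
  then show "norm (G y) \<le> norm (G x0) + L * dist y x0"
    using assms(3)[OF \<open>y \<in> S\<close>] norm_triangle_sub[of "G y" "G x0"] by linarith
qed

lemma onorm_le_SUP_if_lipschitz:
  fixes J :: "'a::real_normed_vector \<Rightarrow> 'a \<Rightarrow> 'b::real_normed_vector"
  assumes "\<And>x. bounded_linear (J x)" "\<And>x y. onorm (\<lambda>d. J y d - J x d) \<le> L * norm (y - x)"
    and "bounded S" "x0 \<in> S" "x \<in> S"
  shows "onorm (J x) \<le> (SUP y\<in>S. onorm (J y))"
proof (rule le_SUP_if_lipschitz_on[OF assms(3,4) _ assms(5)])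
  fix y
  have "onorm (J y) \<le> onorm (\<lambda>d. J y d - J x0 d) + onorm (J x0)"
    using onorm_triangle[of "\<lambda>d. J y d - J x0 d" "J x0"] assms(1) by (simp add: bounded_linear_sub)
  then show "onorm (J y) \<le> onorm (J x0) + L * dist y x0"
    using assms(2)[of y x0] by (simp add: dist_norm)
qed

lemma nonneg_if_le_mult_dist:
  fixes x :: "'a::euclidean_space"
  assumes "x \<in> interior S" "\<And>y. y \<in> S \<Longrightarrow> 0 \<le> F y" "\<And>y. y \<in> S \<Longrightarrow> F y \<le> L * dist y x"
  shows "0 \<le> L"
proof -
  obtain e where "0 < e" "ball x e \<subseteq> S"
    using assms(1) mem_interior by blast
  obtain b :: 'a where "b \<in> Basis"
    using nonempty_Basis by blast
  define y where "y = x + (e / 2) *\<^sub>R b"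
  have "dist y x = e / 2"
    using \<open>0 < e\<close> \<open>b \<in> Basis\<close> by (simp add: y_def dist_norm)
  moreover have "y \<in> S"
    using \<open>ball x e \<subseteq> S\<close> \<open>dist y x = e / 2\<close> \<open>0 < e\<close> by (auto simp: dist_commute)
  ultimately have "0 \<le> L * (e / 2)"
    using assms(2,3) by (metis order_trans)
  with \<open>0 < e\<close> show ?thesis
    by (simp add: zero_le_mult_iff)
qed

lemma onorm_lipschitz_const_nonneg:
  fixes J :: "'a::euclidean_space \<Rightarrow> 'a \<Rightarrow> 'b::real_normed_vector"
  assumes "\<And>x. bounded_linear (J x)" "\<And>x y. onorm (\<lambda>d. J y d - J x d) \<le> L * norm (y - x)"
  shows "0 \<le> L"
proof (rule nonneg_if_le_mult_dist[of 0 UNIV "\<lambda>y. onorm (\<lambda>d. J y d - J 0 d)"])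
  fix y :: 'a
  show "0 \<le> onorm (\<lambda>d. J y d - J 0 d)"
    using assms(1) by (intro onorm_pos_le bounded_linear_sub)
  show "onorm (\<lambda>d. J y d - J 0 d) \<le> L * dist y 0"
    using assms(2)[of y 0] by (simp add: dist_norm)
qed simp

lemma pos_if_doubling:
  fixes c :: "nat \<Rightarrow> real"
  assumes "0 < c 1" "\<And>j. 1 \<le> j \<Longrightarrow> j < k \<Longrightarrow> c (Suc j) = 2 * c j \<or> c (Suc j) = c j"
    and "1 \<le> j" "j \<le> k"
  shows "0 < c j"
  using assms(3,4)
proof (induction j rule: nat_induct_at_least)
  case (Suc j)
  then show ?case
    using assms(2)[of j] by auto
qed (use assms(1) in simp)

section \<open>The iterates of NL-IAPIAL\<close>

locale nl_iapial =
  fixes f :: "'n::euclidean_space \<Rightarrow> real" and gradf :: "'n \<Rightarrow> 'n" and h :: "'n \<Rightarrow> real"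
    and H :: "'n set" and g :: "'n \<Rightarrow> 'l::euclidean_space" and Jg :: "'n \<Rightarrow> 'n \<Rightarrow> 'l"
    and K :: "'l set" and Kh mf Lf Lg Bf1 Bg0 Bg1 Dh lam \<sigma> :: real
  assumes closed_K: "closed K" and convex_cone_K: "convex_cone K"
    and convex_H: "convex H" and H_nonempty: "H \<noteq> {}"
    and diameter_H: "\<And>x y. x \<in> H \<Longrightarrow> y \<in> H \<Longrightarrow> norm (x - y) \<le> Dh"
    and convex_h: "convex_on H h"
    and lipschitz_h: "\<And>x y. x \<in> H \<Longrightarrow> y \<in> H \<Longrightarrow> \<bar>h x - h y\<bar> \<le> Kh * dist x y"
    and weakly_convex_f: "\<And>x y. x \<in> H \<Longrightarrow> y \<in> H \<Longrightarrow>
      f y - f x - inner (gradf x) (y - x) \<ge> - (mf / 2) * (norm (y - x))\<^sup>2"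
    and gradf_bound: "\<And>x. x \<in> H \<Longrightarrow> norm (gradf x) \<le> Bf1"
    and K_convex_g: "K_convex K g"
    and g_deriv: "\<And>x. (g has_derivative Jg x) (at x)"
    and Jg_lipschitz: "\<And>x y. onorm (\<lambda>d. Jg y d - Jg x d) \<le> Lg * norm (y - x)"
    and g_bound: "\<And>x. x \<in> H \<Longrightarrow> norm (g x) \<le> Bg0"
    and Jg_bound: "\<And>x. x \<in> H \<Longrightarrow> onorm (Jg x) \<le> Bg1"
    and Kh_nonneg: "0 \<le> Kh" and Lf_nonneg: "0 \<le> Lf" and Lg_nonneg: "0 \<le> Lg" and mf_pos: "0 < mf"
    and lam_pos: "0 < lam" and lam_le: "lam \<le> 1 / (2 * mf)"
    and sigma_nonneg: "0 \<le> \<sigma>" and sigma_sq_le: "\<sigma>\<^sup>2 \<le> 1 / 2"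
begin

abbreviation L :: "real \<Rightarrow> 'n \<Rightarrow> 'l \<Rightarrow> real" where
  "L c z p \<equiv> aug_lagr f h g K c z p"

abbreviation multiplier :: "real \<Rightarrow> 'l \<Rightarrow> 'n \<Rightarrow> 'l" where
  "multiplier c p z \<equiv> closest_point (dual_cone K) (p + c *\<^sub>R g z)"

abbreviation Lpsi :: "real \<Rightarrow> 'l \<Rightarrow> real" where
  "Lpsi c p \<equiv> lam * Lam Lf Lg Bg0 Bg1 c p + 1"

text \<open>
  \<open>prox_step c p z0 z v \<epsilon>\<close> is step (1) of NL-IAPIAL with \<open>c = c\<^sub>k\<close>, \<open>p = p\<^sub>k\<^sub>-\<^sub>1\<close>, \<open>z0 = z\<^sub>k\<^sub>-\<^sub>1\<close>,
  and \<open>multiplier c p z\<close> is the update \<open>p\<^sub>k\<close> of step (3).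
\<close>

definition prox_step :: "real \<Rightarrow> 'l \<Rightarrow> 'n \<Rightarrow> 'n \<Rightarrow> 'n \<Rightarrow> real \<Rightarrow> bool" where
  "prox_step c p z0 z v \<epsilon> \<longleftrightarrow> z \<in> H \<and> 0 \<le> \<epsilon> \<and>
     v \<in> eps_subdiff_on H \<epsilon> (\<lambda>x. lam * L c x p + (norm (x - z0))\<^sup>2 / 2) z \<and>
     (norm v)\<^sup>2 + 2 * \<epsilon> \<le> (\<sigma> / sqrt (Lpsi c p))\<^sup>2 * (norm (v + z0 - z))\<^sup>2"

definition \<kappa>\<^sub>0 :: real where
  "\<kappa>\<^sub>0 = 2 * (Kh + Bf1) * Dh + (\<sigma>\<^sup>2 / (2 * (1 - \<sigma>)\<^sup>2) + 2 * ((1 + \<sigma>) / (1 - \<sigma>))) * Dh\<^sup>2 / lam"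

lemma sigma_lt_one: "\<sigma> < 1"
proof (rule ccontr)
  assume "\<not> \<sigma> < 1"
  then have "1 \<le> \<sigma>\<^sup>2"
    by (simp add: one_le_power)
  with sigma_sq_le show False
    by simp
qed

lemma linear_Jg: "linear (Jg x)"
  using g_deriv by (rule has_derivative_linear)

lemma Dh_nonneg: "0 \<le> Dh"
  using diameter_H H_nonempty by (metis all_not_in_conv norm_ge_zero order_trans)

lemma Bf1_nonneg: "0 \<le> Bf1"
  using gradf_bound H_nonempty by (meson all_not_in_conv norm_ge_zero order_trans)

lemma Bg0_nonneg: "0 \<le> Bg0"
  using g_bound H_nonempty by (meson all_not_in_conv norm_ge_zero order_trans)

lemma lam_mf_le: "lam * mf \<le> 1 / 2"
  using lam_le mf_pos by (simp add: field_simps)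

lemma Lpsi_ge_one:
  assumes "0 < c"
  shows "1 \<le> Lpsi c p"
  using assms lam_pos Lf_nonneg Lg_nonneg Bg0_nonneg by (simp add: Lam_def)

lemma g_lipschitz_on_H:
  assumes "x \<in> H" "y \<in> H"
  shows "norm (g x - g y) \<le> Bg1 * norm (x - y)"
  by (rule differentiable_bound[OF convex_H _ _ assms])
    (use g_deriv Jg_bound has_derivative_at_withinI in blast)+

lemma objective_increase_le:
  assumes "u \<in> H" "z \<in> H"
  shows "f u + h u - (f z + h z) \<le> (Kh + Bf1) * Dh + mf * Dh\<^sup>2 / 2"
proof -
  have "- inner (gradf u) (z - u) \<le> norm (gradf u) * norm (z - u)"
    using Cauchy_Schwarz_ineq2[of "gradf u" "z - u"] by simp
  also have "\<dots> \<le> Bf1 * Dh"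
    using gradf_bound[OF assms(1)] diameter_H[OF assms(2,1)] order_trans[OF norm_ge_zero gradf_bound[OF assms(1)]]
    by (intro mult_mono) auto
  finally have "- inner (gradf u) (z - u) \<le> Bf1 * Dh" .
  moreover have "mf / 2 * (norm (z - u))\<^sup>2 \<le> mf / 2 * Dh\<^sup>2"
    using assms diameter_H mf_pos by (intro mult_left_mono power_mono) auto
  moreover have "\<bar>h u - h z\<bar> \<le> Kh * Dh"
    using lipschitz_h[OF assms] mult_left_mono[OF diameter_H[OF assms] Kh_nonneg] by (simp add: dist_norm)
  ultimately show ?thesis
    using weakly_convex_f[OF assms] by (simp add: algebra_simps abs_le_iff)
qed

lemma multiplier_curvature_le_Lpsi:
  assumes "z \<in> H" "0 < c"
  shows "1 + lam * (norm (multiplier c p z) * Lg + c * Bg1\<^sup>2) \<le> Lpsi c p"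
proof -
  have "norm (multiplier c p z) \<le> norm (p + c *\<^sub>R g z)"
    by (rule norm_closest_point_dual_cone_le[OF closed_K convex_cone_K])
  also have "\<dots> \<le> norm p + c * Bg0"
  proof -
    have "c * norm (g z) \<le> c * Bg0"
      using g_bound[OF assms(1)] assms(2) by simp
    moreover have "norm (p + c *\<^sub>R g z) \<le> norm p + c * norm (g z)"
      using norm_triangle_ineq[of p "c *\<^sub>R g z"] assms(2) by simp
    ultimately show ?thesis
      by linarith
  qed
  finally have "norm (multiplier c p z) * Lg \<le> (norm p + c * Bg0) * Lg"
    using Lg_nonneg by (rule mult_right_mono)
  then have "norm (multiplier c p z) * Lg + c * Bg1\<^sup>2 \<le> Lam Lf Lg Bg0 Bg1 c p"
    using Lf_nonneg by (simp add: Lam_def algebra_simps)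
  then show ?thesis
    using lam_pos by (simp add: mult_left_mono)
qed

lemma aug_lagr_segment_diff_le:
  fixes p :: 'l
  assumes "z \<in> H" "u \<in> H" "0 < c" "0 \<le> t" "t \<le> 1"
  defines "P \<equiv> multiplier c p z"
  shows "L c (z + t *\<^sub>R (u - z)) p - L c z p
    \<le> t * (f u + h u - (f z + h z)) + mf * t * (1 - t) * (norm (u - z))\<^sup>2 / 2
      + t * inner P (Jg z (u - z)) + t\<^sup>2 * (norm P * Lg + c * Bg1\<^sup>2) * (norm (u - z))\<^sup>2 / 2"
proof -
  define d where "d = u - z"
  define n where "n = norm d"
  define z' where "z' = z + t *\<^sub>R d"
  define G where "G = inner P (Jg z d)"
  have z': "z' = (1 - t) *\<^sub>R z + t *\<^sub>R u"
    by (simp add: z'_def d_def algebra_simps)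
  have "z' \<in> H"
    unfolding z' using convexD[OF convex_H assms(1,2), of "1 - t" t] assms(4,5) by simp
  have "inner P (g z') - inner P (g z) \<le> inner P (Jg z (t *\<^sub>R d)) + norm P * Lg * (norm (t *\<^sub>R d))\<^sup>2 / 2"
    unfolding z'_def by (rule inner_descent_lemma[OF g_deriv Jg_lipschitz])
  then have "inner P (g z' - g z) \<le> t * G + norm P * Lg * t\<^sup>2 * n\<^sup>2 / 2"
    using assms(4) by (simp add: G_def inner_diff_right n_def power_mult_distrib linear_scale[OF linear_Jg])
  moreover have "norm (g z' - g z) \<le> Bg1 * (t * n)"
    using g_lipschitz_on_H[OF \<open>z' \<in> H\<close> assms(1)] assms(4) by (simp add: z'_def n_def)
  then have "(norm (g z' - g z))\<^sup>2 \<le> (Bg1 * (t * n))\<^sup>2"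
    by (rule power_mono) simp
  then have "c / 2 * (norm (g z' - g z))\<^sup>2 \<le> c / 2 * Bg1\<^sup>2 * t\<^sup>2 * n\<^sup>2"
    using assms(3) by (simp add: mult_left_mono power_mult_distrib)
  moreover have "f z' \<le> (1 - t) * f z + t * f u + mf * t * (1 - t) * n\<^sup>2 / 2"
    unfolding z' n_def d_def
    by (rule weakly_convex_interpolation[OF weakly_convex_f convex_H assms(1,2,4,5)])
  moreover have "h z' \<le> (1 - t) * h z + t * h u"
    unfolding z' using convex_onD[OF convex_h, of t z u] assms(1,2,4,5) by simp
  moreover have "L c z' p - L c z p
      \<le> f z' + h z' - (f z + h z) + inner P (g z' - g z) + c / 2 * (norm (g z' - g z))\<^sup>2"
    unfolding P_def by (rule aug_lagr_diff_le[OF closed_K convex_cone_K assms(3)])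
  moreover have "t\<^sup>2 * (norm P * Lg + c * Bg1\<^sup>2) * n\<^sup>2 / 2
      = norm P * Lg * t\<^sup>2 * n\<^sup>2 / 2 + c / 2 * Bg1\<^sup>2 * t\<^sup>2 * n\<^sup>2"
    "t * (f u + h u - (f z + h z)) = t * f u + t * h u - t * f z - t * h z"
    "(1 - t) * f z = f z - t * f z" "(1 - t) * h z = h z - t * h z"
    by (simp_all add: algebra_simps)
  ultimately have "L c z' p - L c z p \<le> t * (f u + h u - (f z + h z)) + mf * t * (1 - t) * n\<^sup>2 / 2
      + t * G + t\<^sup>2 * (norm P * Lg + c * Bg1\<^sup>2) * n\<^sup>2 / 2"
    by linarith
  then show ?thesis
    unfolding z'_def G_def n_def d_def .
qed

lemma eps_subdiff_segment_estimate:
  assumes v: "v \<in> eps_subdiff_on H \<epsilon> (\<lambda>x. lam * L c x p + (norm (x - z0))\<^sup>2 / 2) z"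
    and "z \<in> H" "u \<in> H" "0 < c" "0 \<le> t" "t \<le> 1"
  defines "P \<equiv> multiplier c p z"
  shows "t * (- lam * inner P (Jg z (u - z)))
    \<le> t * (lam * (f u + h u - (f z + h z)) + lam * mf * (1 - t) * (norm (u - z))\<^sup>2 / 2
        + inner (z - z0 - v) (u - z))
      + t\<^sup>2 * (1 + lam * (norm P * Lg + c * Bg1\<^sup>2)) * (norm (u - z))\<^sup>2 / 2 + \<epsilon>"
proof -
  define Q where "Q = norm P * Lg + c * Bg1\<^sup>2"
  define G where "G = inner P (Jg z (u - z))"
  define n where "n = norm (u - z)"
  have "z + t *\<^sub>R (u - z) \<in> H"
    using convexD[OF convex_H assms(2,3), of "1 - t" t] assms(5,6) by (simp add: algebra_simps)
  from eps_subdiff_prox_decrease[OF v this]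
  have "lam * L c z p - lam * L c (z + t *\<^sub>R (u - z)) p
      \<le> t * inner (z - z0 - v) (u - z) + t\<^sup>2 * n\<^sup>2 / 2 + \<epsilon>"
    by (simp add: n_def)
  moreover have "lam * (L c (z + t *\<^sub>R (u - z)) p - L c z p)
      \<le> lam * (t * (f u + h u - (f z + h z)) + mf * t * (1 - t) * n\<^sup>2 / 2 + t * G + t\<^sup>2 * Q * n\<^sup>2 / 2)"
    using aug_lagr_segment_diff_le[OF assms(2-6), of p] lam_pos
    by (intro mult_left_mono) (simp_all add: P_def G_def Q_def n_def)
  moreover have "lam * (L c (z + t *\<^sub>R (u - z)) p - L c z p)
      = lam * L c (z + t *\<^sub>R (u - z)) p - lam * L c z p"
    by (simp add: right_diff_distrib)
  moreover have "lam * (t * (f u + h u - (f z + h z)) + mf * t * (1 - t) * n\<^sup>2 / 2 + t * G + t\<^sup>2 * Q * n\<^sup>2 / 2)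
      + (t * inner (z - z0 - v) (u - z) + t\<^sup>2 * n\<^sup>2 / 2)
      = t * (lam * (f u + h u - (f z + h z)) + lam * mf * (1 - t) * n\<^sup>2 / 2 + inner (z - z0 - v) (u - z))
        + t\<^sup>2 * (1 + lam * Q) * n\<^sup>2 / 2 - t * (- lam * G)"
    by (simp add: algebra_simps)
  ultimately show ?thesis
    unfolding G_def Q_def n_def by linarith
qed

lemma prox_step_direction_estimate:
  assumes step: "prox_step c p z0 z v \<epsilon>" and "u \<in> H" "0 < c"
  defines "t \<equiv> 1 / Lpsi c p"
  shows "- lam * inner (multiplier c p z) (Jg z (u - z))
    \<le> lam * (f u + h u - (f z + h z)) + lam * mf * (1 - t) * (norm (u - z))\<^sup>2 / 2
      + (norm (u - z))\<^sup>2 / 2 + inner (z - z0 - v) (u - z) + \<epsilon> * Lpsi c p"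
proof -
  define Q where "Q = norm (multiplier c p z) * Lg + c * Bg1\<^sup>2"
  define n where "n = norm (u - z)"
  define R where "R = lam * (f u + h u - (f z + h z)) + lam * mf * (1 - t) * n\<^sup>2 / 2
    + inner (z - z0 - v) (u - z)"
  have "z \<in> H" and v: "v \<in> eps_subdiff_on H \<epsilon> (\<lambda>x. lam * L c x p + (norm (x - z0))\<^sup>2 / 2) z"
    using step by (simp_all add: prox_step_def)
  have t: "0 < t" "t \<le> 1" "t * Lpsi c p = 1"
    using Lpsi_ge_one[OF assms(3), of p] by (simp_all add: t_def)
  \<comment> \<open>at t = 1 / Lpsi the curvature term is dominated by the proximal term\<close>
  have "t * (1 + lam * Q) \<le> 1"
    using multiplier_curvature_le_Lpsi[OF \<open>z \<in> H\<close> assms(3), of p] t(1,3)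
    by (metis Q_def mult.commute mult_left_mono less_imp_le)
  then have "t * (1 + lam * Q) * (t * n\<^sup>2 / 2) \<le> 1 * (t * n\<^sup>2 / 2)"
    by (rule mult_right_mono) (use t(1) in simp)
  then have "t\<^sup>2 * (1 + lam * Q) * n\<^sup>2 / 2 \<le> t * (n\<^sup>2 / 2)"
    by (simp add: power2_eq_square algebra_simps)
  moreover have "\<epsilon> = t * (\<epsilon> * Lpsi c p)"
    using t(3) by (metis mult.left_commute mult_1_right)
  moreover have "t * (R + n\<^sup>2 / 2 + \<epsilon> * Lpsi c p) = t * R + t * (n\<^sup>2 / 2) + t * (\<epsilon> * Lpsi c p)"
    by (simp add: distrib_left)
  moreover note eps_subdiff_segment_estimate[OF v \<open>z \<in> H\<close> assms(2,3) less_imp_le[OF t(1)] t(2),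
      folded n_def, folded Q_def R_def]
  ultimately have "t * (- lam * inner (multiplier c p z) (Jg z (u - z))) \<le> t * (R + n\<^sup>2 / 2 + \<epsilon> * Lpsi c p)"
    by linarith
  then have "- lam * inner (multiplier c p z) (Jg z (u - z)) \<le> R + n\<^sup>2 / 2 + \<epsilon> * Lpsi c p"
    using t(1) by (rule mult_left_le_imp_le)
  then show ?thesis
    unfolding R_def n_def by linarith
qed

lemma prox_step_residual_bounds:
  assumes step: "prox_step c p z0 z v \<epsilon>" and "z0 \<in> H" "u \<in> H" "0 < c"
  shows "inner (z - z0 - v) (u - z) \<le> Dh\<^sup>2 / (1 - \<sigma>)"
    and "\<epsilon> * Lpsi c p \<le> \<sigma>\<^sup>2 * Dh\<^sup>2 / (2 * (1 - \<sigma>)\<^sup>2)"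
proof -
  have "z \<in> H" "0 \<le> \<epsilon>" and err: "(norm v)\<^sup>2 + 2 * \<epsilon> \<le> (\<sigma> / sqrt (Lpsi c p))\<^sup>2 * (norm (v + (z0 - z)))\<^sup>2"
    using step by (simp_all add: prox_step_def add_diff_eq)
  note bounds = inexact_prox_error_bounds[OF sigma_nonneg sigma_lt_one Lpsi_ge_one[OF assms(4)] \<open>0 \<le> \<epsilon>\<close> err]
  have "(1 - \<sigma>) * norm (v + z0 - z) \<le> Dh"
    using bounds(3) diameter_H[OF assms(2) \<open>z \<in> H\<close>] by (simp add: add_diff_eq)
  then have r: "norm (v + z0 - z) \<le> Dh / (1 - \<sigma>)"
    using sigma_lt_one by (simp add: pos_le_divide_eq mult.commute)
  have "z - z0 - v = - (v + z0 - z)"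
    by (simp add: algebra_simps)
  then have "inner (z - z0 - v) (u - z) \<le> norm (v + z0 - z) * norm (u - z)"
    using norm_cauchy_schwarz[of "z - z0 - v" "u - z"] by (simp only: norm_minus_cancel)
  also have "\<dots> \<le> Dh / (1 - \<sigma>) * Dh"
    using r diameter_H[OF assms(3) \<open>z \<in> H\<close>] sigma_lt_one Dh_nonneg by (intro mult_mono) simp_all
  finally show "inner (z - z0 - v) (u - z) \<le> Dh\<^sup>2 / (1 - \<sigma>)"
    by (simp add: power2_eq_square)
  have "(norm (v + z0 - z))\<^sup>2 \<le> (Dh / (1 - \<sigma>))\<^sup>2"
    using r by (simp add: power_mono)
  then have "\<sigma>\<^sup>2 * (norm (v + z0 - z))\<^sup>2 \<le> \<sigma>\<^sup>2 * (Dh / (1 - \<sigma>))\<^sup>2"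
    by (rule mult_left_mono) simp
  then have "\<sigma>\<^sup>2 * (norm (v + z0 - z))\<^sup>2 \<le> \<sigma>\<^sup>2 * Dh\<^sup>2 / (1 - \<sigma>)\<^sup>2"
    by (simp add: power_divide)
  with bounds(2) show "\<epsilon> * Lpsi c p \<le> \<sigma>\<^sup>2 * Dh\<^sup>2 / (2 * (1 - \<sigma>)\<^sup>2)"
    by (simp add: add_diff_eq)
qed

lemma \<kappa>\<^sub>0_bound:
  "lam * (Kh + Bf1) * Dh + Dh\<^sup>2 + Dh\<^sup>2 / (1 - \<sigma>) + \<sigma>\<^sup>2 * Dh\<^sup>2 / (2 * (1 - \<sigma>)\<^sup>2) \<le> lam * \<kappa>\<^sub>0"
proof -
  have "\<sigma> * \<sigma> \<le> \<sigma>"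
    using sigma_nonneg sigma_lt_one by (simp add: mult_left_le_one_le)
  then have "1 + 1 / (1 - \<sigma>) \<le> 2 * ((1 + \<sigma>) / (1 - \<sigma>))"
    using sigma_lt_one by (simp add: field_simps)
  then have "(1 + 1 / (1 - \<sigma>) + \<sigma>\<^sup>2 / (2 * (1 - \<sigma>)\<^sup>2)) * Dh\<^sup>2
      \<le> (\<sigma>\<^sup>2 / (2 * (1 - \<sigma>)\<^sup>2) + 2 * ((1 + \<sigma>) / (1 - \<sigma>))) * Dh\<^sup>2"
    by (intro mult_right_mono) auto
  moreover have "0 \<le> lam * (Kh + Bf1) * Dh"
    using lam_pos Kh_nonneg Bf1_nonneg Dh_nonneg by simp
  moreover have "(1 + 1 / (1 - \<sigma>) + \<sigma>\<^sup>2 / (2 * (1 - \<sigma>)\<^sup>2)) * Dh\<^sup>2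
      = Dh\<^sup>2 + Dh\<^sup>2 / (1 - \<sigma>) + \<sigma>\<^sup>2 * Dh\<^sup>2 / (2 * (1 - \<sigma>)\<^sup>2)"
    by (simp add: distrib_right)
  moreover have "lam * \<kappa>\<^sub>0
      = 2 * (lam * (Kh + Bf1) * Dh) + (\<sigma>\<^sup>2 / (2 * (1 - \<sigma>)\<^sup>2) + 2 * ((1 + \<sigma>) / (1 - \<sigma>))) * Dh\<^sup>2"
    using lam_pos unfolding \<kappa>\<^sub>0_def by (simp add: distrib_left)
  ultimately show ?thesis
    by linarith
qed

lemma multiplier_direction_bound:
  assumes step: "prox_step c p z0 z v \<epsilon>" and "z0 \<in> H" "u \<in> H" "0 < c"
  shows "inner (adjoint (Jg z) (multiplier c p z)) (z - u) \<le> \<kappa>\<^sub>0"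
proof -
  define t where "t = 1 / Lpsi c p"
  define n where "n = norm (u - z)"
  have "z \<in> H"
    using step by (simp add: prox_step_def)
  have "0 \<le> t" "t \<le> 1"
    using Lpsi_ge_one[OF assms(4), of p] by (simp_all add: t_def)
  have n: "n\<^sup>2 \<le> Dh\<^sup>2"
    using diameter_H[OF assms(3) \<open>z \<in> H\<close>] by (simp add: n_def power_mono)
  have "lam * (f u + h u - (f z + h z)) \<le> lam * ((Kh + Bf1) * Dh + mf * Dh\<^sup>2 / 2)"
    using objective_increase_le[OF assms(3) \<open>z \<in> H\<close>] lam_pos by (simp add: mult_left_mono)
  also have "\<dots> = lam * (Kh + Bf1) * Dh + lam * mf * Dh\<^sup>2 / 2"
    by (simp add: algebra_simps)
  finally have "lam * (f u + h u - (f z + h z)) \<le> lam * (Kh + Bf1) * Dh + lam * mf * Dh\<^sup>2 / 2" .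
  moreover have "lam * mf * Dh\<^sup>2 \<le> Dh\<^sup>2 / 2"
    using mult_right_mono[OF lam_mf_le, of "Dh\<^sup>2"] by simp
  moreover have "lam * mf * (1 - t) * n\<^sup>2 \<le> lam * mf * Dh\<^sup>2"
    using \<open>0 \<le> t\<close> \<open>t \<le> 1\<close> n lam_pos mf_pos mult_left_le_one_le[of "n\<^sup>2" "1 - t"]
    by (simp add: mult.assoc mult_left_mono)
  moreover note prox_step_direction_estimate[OF step assms(3,4), folded t_def n_def]
    prox_step_residual_bounds[OF step assms(2-4)] \<kappa>\<^sub>0_bound
  ultimately have "lam * (- inner (multiplier c p z) (Jg z (u - z))) \<le> lam * \<kappa>\<^sub>0"
    using n by simp
  then have "- inner (multiplier c p z) (Jg z (u - z)) \<le> \<kappa>\<^sub>0"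
    using lam_pos by (rule mult_left_le_imp_le)
  moreover have "inner (adjoint (Jg z) (multiplier c p z)) (z - u) = - inner (multiplier c p z) (Jg z (u - z))"
    using adjoint_works[OF linear_Jg, where x = "z - u" and y = "multiplier c p z"]
    by (simp add: inner_commute linear_diff[OF linear_Jg] inner_diff_left inner_diff_right)
  ultimately show ?thesis
    by simp
qed

lemma lagrangian_bound:
  assumes step: "prox_step c p z0 z v \<epsilon>" and "z0 \<in> H" "u \<in> H" "cone_le K (g u) 0" "0 < c"
  shows "L c z (multiplier c p z) \<le> f u + h u + Dh\<^sup>2 / lam + (norm (multiplier c p z - p))\<^sup>2 / c"
proof -
  have "z \<in> H" "0 \<le> \<epsilon>" and v: "v \<in> eps_subdiff_on H \<epsilon> (\<lambda>x. lam * L c x p + (norm (x - z0))\<^sup>2 / 2) z"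
    and err: "(norm v)\<^sup>2 + 2 * \<epsilon> \<le> (\<sigma> / sqrt (Lpsi c p))\<^sup>2 * (norm (v + (z0 - z)))\<^sup>2"
    using step by (simp_all add: prox_step_def add_diff_eq)
  have "(norm v)\<^sup>2 + 2 * \<epsilon> \<le> \<sigma>\<^sup>2 * (norm (v + z0 - z))\<^sup>2"
    using inexact_prox_error_bounds(1)[OF sigma_nonneg sigma_lt_one Lpsi_ge_one[OF assms(5)] \<open>0 \<le> \<epsilon>\<close> err]
    by (simp add: add_diff_eq)
  from eps_subdiff_prox_value_le[OF v this sigma_sq_le \<open>0 \<le> \<epsilon>\<close> assms(3)]
  have "lam * L c z p \<le> lam * L c u p + (norm (u - z0))\<^sup>2" .
  also have "\<dots> \<le> lam * (f u + h u) + Dh\<^sup>2"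
    using aug_lagr_feasible_le[OF convex_cone_K assms(5), where g = g and u = u, OF assms(4)]
      lam_pos diameter_H[OF assms(3,2)] Dh_nonneg
    by (intro add_mono mult_left_mono power_mono) auto
  finally have "L c z p \<le> f u + h u + Dh\<^sup>2 / lam"
    using lam_pos by (simp add: field_simps)
  with aug_lagr_multiplier_update_le[OF closed_K convex_cone_K assms(5),
      where f = f and h = h and g = g and z = z and p = p] show ?thesis
    by linarith
qed

definition iterates ::
    "(nat \<Rightarrow> real) \<Rightarrow> (nat \<Rightarrow> 'l) \<Rightarrow> (nat \<Rightarrow> 'n) \<Rightarrow> (nat \<Rightarrow> 'n) \<Rightarrow> (nat \<Rightarrow> real) \<Rightarrow> nat \<Rightarrow> bool"
  where "iterates c p z v \<epsilon> k \<longleftrightarrow> z 0 \<in> H \<and> (\<forall>j\<in>{1..k}. 0 < c j \<and>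
    prox_step (c j) (p (j - 1)) (z (j - 1)) (z j) (v j) (\<epsilon> j) \<and> p j = multiplier (c j) (p (j - 1)) (z j))"

lemma iteratesI:
  assumes "z 0 \<in> H" "0 < c 1"
    and "\<And>j. 1 \<le> j \<Longrightarrow> j < k \<Longrightarrow> c (Suc j) = 2 * c j \<or> c (Suc j) = c j"
    and "\<And>j. 1 \<le> j \<Longrightarrow> j \<le> k \<Longrightarrow>
      prox_step (c j) (p (j - 1)) (z (j - 1)) (z j) (v j) (\<epsilon> j) \<and> p j = multiplier (c j) (p (j - 1)) (z j)"
  shows "iterates c p z v \<epsilon> k"
  using assms(1,4) pos_if_doubling[of c k, OF assms(2,3)] by (simp add: iterates_def)

lemma iterates_in_H:
  assumes "iterates c p z v \<epsilon> k" "j \<le> k"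
  shows "z j \<in> H"
proof (cases "j = 0")
  case False
  with assms have "prox_step (c j) (p (j - 1)) (z (j - 1)) (z j) (v j) (\<epsilon> j)"
    by (simp add: iterates_def)
  then show ?thesis
    by (simp add: prox_step_def)
qed (use assms in \<open>simp add: iterates_def\<close>)

end

locale nl_iapial_slater = nl_iapial +
  fixes zbar and s \<tau> :: real
  assumes slater: "cone_le K (g zbar) 0" and cball_in_H: "cball zbar s \<subseteq> H"
    and s_pos: "0 < s" and s_le_one: "s \<le> 1" and tau_pos: "0 < \<tau>"
    and regular: "\<And>x q. x \<in> H \<Longrightarrow> q \<in> dual_cone K \<Longrightarrow>
      \<tau> * norm q \<le> max (norm (adjoint (Jg x) q)) \<bar>inner q (g zbar)\<bar>"
begin

lemma multiplier_norm_step: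
  assumes step: "prox_step c p z0 z v \<epsilon>" and "z0 \<in> H" "0 < c"
  shows "norm (multiplier c p z) \<le> norm p \<or> s * \<tau> * norm (multiplier c p z) \<le> \<kappa>\<^sub>0"
proof (cases "norm (multiplier c p z) \<le> norm p")
  case False
  then have "0 \<le> inner (multiplier c p z) (g z)"
    by (intro inner_closest_point_dual_cone_nonneg[OF closed_K convex_cone_K assms(3)]) simp
  moreover have "z \<in> H"
    using step by (simp add: prox_step_def)
  moreover have P: "multiplier c p z \<in> dual_cone K"
    by (rule closest_point_dual_cone(1)[OF closed_K convex_cone_K])
  moreover have "\<And>u. u \<in> H \<Longrightarrow> inner (adjoint (Jg z) (multiplier c p z)) (z - u) \<le> \<kappa>\<^sub>0"
    using multiplier_direction_bound[OF step assms(2) _ assms(3)] by blast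
  ultimately have "s * \<tau> * norm (multiplier c p z) \<le> \<kappa>\<^sub>0"
    using s_pos s_le_one tau_pos regular
    by (intro multiplier_bound_by_regularity[OF K_convex_g g_deriv _ _ slater cball_in_H]) auto
  then show ?thesis
    by simp
qed simp

lemma iterates_multiplier_bound:
  assumes it: "iterates c p z v \<epsilon> k" and "norm (p 0) \<le> C" "\<kappa>\<^sub>0 \<le> s * \<tau> * C" "j \<le> k"
  shows "norm (p j) \<le> C"
  using \<open>j \<le> k\<close>
proof (induction j)
  case 0
  then show ?case
    using assms(2) by simp
next
  case (Suc j)
  then have "Suc j \<in> {1..k}"
    by simp
  with it have "0 < c (Suc j)
      \<and> prox_step (c (Suc j)) (p (Suc j - 1)) (z (Suc j - 1)) (z (Suc j)) (v (Suc j)) (\<epsilon> (Suc j))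
      \<and> p (Suc j) = multiplier (c (Suc j)) (p (Suc j - 1)) (z (Suc j))"
    unfolding iterates_def by blast
  then have "0 < c (Suc j)" and step: "prox_step (c (Suc j)) (p j) (z j) (z (Suc j)) (v (Suc j)) (\<epsilon> (Suc j))"
    and p: "p (Suc j) = multiplier (c (Suc j)) (p j) (z (Suc j))"
    by simp_all
  have "norm (p (Suc j)) \<le> C" if "s * \<tau> * norm (p (Suc j)) \<le> \<kappa>\<^sub>0"
  proof -
    have "s * \<tau> * norm (p (Suc j)) \<le> s * \<tau> * C"
      using that assms(3) by linarith
    then show ?thesis
      by (rule mult_left_le_imp_le) (use s_pos tau_pos in simp)
  qed
  with multiplier_norm_step[OF step iterates_in_H[OF it] \<open>0 < c (Suc j)\<close>] Suc show ?case
    by (auto simp: p)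
qed

lemma iterates_lagrangian_bound:
  assumes it: "iterates c p z v \<epsilon> k" and "1 \<le> k" "norm (p 0) \<le> C" "\<kappa>\<^sub>0 \<le> s * \<tau> * C"
  shows "L (c k) (z k) (p k) \<le> (INF x\<in>{x\<in>H. cone_le K (g x) 0}. f x + h x) + Dh\<^sup>2 / lam + 4 * C\<^sup>2 / c k"
proof -
  have "0 < c k" and step: "prox_step (c k) (p (k - 1)) (z (k - 1)) (z k) (v k) (\<epsilon> k)"
    and p: "p k = multiplier (c k) (p (k - 1)) (z k)"
    using it \<open>1 \<le> k\<close> by (auto simp: iterates_def)
  have "norm (p k - p (k - 1)) \<le> 2 * C"
    using norm_triangle_ineq4[of "p k" "p (k - 1)"] iterates_multiplier_bound[OF it assms(3,4), of k]
      iterates_multiplier_bound[OF it assms(3,4), of "k - 1"] by simp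
  then have "(norm (p k - p (k - 1)))\<^sup>2 \<le> (2 * C)\<^sup>2"
    by (rule power_mono) simp
  then have jump: "(norm (p k - p (k - 1)))\<^sup>2 / c k \<le> 4 * C\<^sup>2 / c k"
    using \<open>0 < c k\<close> by (intro divide_right_mono) (simp_all add: power_mult_distrib)
  have "zbar \<in> {x\<in>H. cone_le K (g x) 0}"
    using cball_in_H s_pos slater by auto
  then have "L (c k) (z k) (p k) - Dh\<^sup>2 / lam - 4 * C\<^sup>2 / c k \<le> (INF x\<in>{x\<in>H. cone_le K (g x) 0}. f x + h x)"
    using lagrangian_bound[OF step iterates_in_H[OF it] _ _ \<open>0 < c k\<close>] jump
    unfolding p[symmetric] by (intro cINF_greatest) fastforce+
  then show ?thesis
    by linarith
qed

end

lemma nl_iapial_slaterI: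
  fixes f :: "'n::euclidean_space \<Rightarrow> real" and g :: "'n \<Rightarrow> 'l::euclidean_space"
  assumes cone: "closed K" "convex_cone K"
    and B1: "H \<noteq> {}" "compact H" "convex H" "convex_on H h"
      "\<forall>x\<in>H. \<forall>y\<in>H. \<bar>h x - h y\<bar> \<le> Kh * dist x y"
    and B2: "mf > 0" "Lf > 0"
      "\<forall>x\<in>H. \<forall>y\<in>H. f y - f x - inner (gradf x) (y - x) \<ge> - (mf / 2) * (norm (y - x))\<^sup>2"
      "\<forall>x\<in>H. \<forall>y\<in>H. norm (gradf y - gradf x) \<le> Lf * norm (y - x)"
    and B3: "K_convex K g" "\<forall>x. (g has_derivative Jg x) (at x)"
      "\<forall>x y. onorm (\<lambda>d. Jg y d - Jg x d) \<le> Lg * norm (y - x)"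
    and B4: "zbar \<in> interior H" "0 < \<tau>" "cone_le K (g zbar) 0"
      "\<forall>x\<in>H. \<forall>q\<in>dual_cone K. max (norm (adjoint (Jg x) q)) \<bar>inner q (g zbar)\<bar> \<ge> \<tau> * norm q"
    and params: "0 < lam" "lam \<le> 1 / (2 * mf)" "0 < \<sigma>" "\<sigma> \<le> 1 / sqrt 2"
  shows "nl_iapial_slater f gradf h H g Jg K Kh mf Lf Lg (SUP x\<in>H. norm (gradf x)) (SUP x\<in>H. norm (g x))
    (SUP x\<in>H. onorm (Jg x)) (diameter H) lam \<sigma> zbar (min 1 (infdist zbar (frontier H))) \<tau>"
proof -
  have "bounded H" "closed H"
    using B1(2) compact_imp_bounded compact_imp_closed by blast+
  have "zbar \<in> H"
    using B4(1) interior_subset by blast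
  note ball = cball_infdist_frontier_subset[OF \<open>closed H\<close> \<open>bounded H\<close> B4(1)]
  have bounded_linear_Jg: "\<And>x. bounded_linear (Jg x)"
    using B3(2) has_derivative_bounded_linear by blast
  note Jg_bound = onorm_le_SUP_if_lipschitz[OF bounded_linear_Jg B3(3)[rule_format] \<open>bounded H\<close> \<open>zbar \<in> H\<close>]
  have g_lipschitz: "norm (g x - g zbar) \<le> (SUP x\<in>H. onorm (Jg x)) * dist x zbar" if "x \<in> H" for x
  proof -
    have "norm (g x - g zbar) \<le> (SUP x\<in>H. onorm (Jg x)) * norm (x - zbar)"
      by (rule differentiable_bound[OF B1(3) _ _ that \<open>zbar \<in> H\<close>])
        (use B3(2) Jg_bound has_derivative_at_withinI in blast)+
    then show ?thesis
      by (simp add: dist_norm)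
  qed
  have "\<sigma>\<^sup>2 \<le> (1 / sqrt 2)\<^sup>2"
    using params(3,4) by (intro power_mono) auto
  show ?thesis
  proof unfold_locales
    show "norm (x - y) \<le> diameter H" if "x \<in> H" "y \<in> H" for x y
      using diameter_bounded_bound[OF \<open>bounded H\<close> that] by (simp add: dist_norm)
    show "norm (gradf x) \<le> (SUP x\<in>H. norm (gradf x))" if "x \<in> H" for x
      by (rule norm_le_SUP_if_lipschitz_on[where L = Lf, OF \<open>bounded H\<close> \<open>zbar \<in> H\<close> _ that])
        (use B2(4) \<open>zbar \<in> H\<close> in \<open>simp add: dist_norm\<close>)
    show "norm (g x) \<le> (SUP x\<in>H. norm (g x))" if "x \<in> H" for x
      by (rule norm_le_SUP_if_lipschitz_on[OF \<open>bounded H\<close> \<open>zbar \<in> H\<close> g_lipschitz that])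
    show "0 \<le> Kh"
      by (rule nonneg_if_le_mult_dist[OF B4(1), of "\<lambda>y. \<bar>h y - h zbar\<bar>"]) (use B1(5) \<open>zbar \<in> H\<close> in auto)
    show "0 \<le> Lg"
      by (rule onorm_lipschitz_const_nonneg[OF bounded_linear_Jg B3(3)[rule_format]])
    show "cball zbar (min 1 (infdist zbar (frontier H))) \<subseteq> H"
      using ball(2) by auto
  qed (use cone B1(1,3,4) B1(5)[rule_format] B2(1,2) B2(3)[rule_format] B3(1,2) B3(3)[rule_format]
      B4(2,3) B4(4)[rule_format] params(1-3) Jg_bound ball(1) \<open>\<sigma>\<^sup>2 \<le> (1 / sqrt 2)\<^sup>2\<close>
      in \<open>simp_all add: power_divide\<close>)
qed

theorem lemma4p6:
  fixes f :: "'n::euclidean_space \<Rightarrow> real" and gradf :: "'n \<Rightarrow> 'n"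
    and h :: "'n \<Rightarrow> real" and H U :: "'n set"
    and g :: "'n \<Rightarrow> 'l::euclidean_space" and Jg :: "'n \<Rightarrow> 'n \<Rightarrow> 'l"
    and K :: "'l set"
    and Kh mf Lf Lg \<tau> lam \<sigma> c1 \<rho> \<eta> :: real and zbar :: "'n"
    and z v zhat :: "nat \<Rightarrow> 'n" and eps c :: "nat \<Rightarrow> real" and p :: "nat \<Rightarrow> 'l"
    and khat :: "nat \<Rightarrow> nat" and stop :: "nat \<Rightarrow> bool"
    and l k :: nat
    and kappa0 Rphi C0 :: real
  defines "Kstar \<equiv> dual_cone K"
    and "Dh \<equiv> diameter H"
    and "Bf1 \<equiv> (SUP x\<in>H. norm (gradf x))"
    and "Bg0 \<equiv> (SUP x\<in>H. norm (g x))"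
    and "Bg1 \<equiv> (SUP x\<in>H. onorm (Jg x))"
    and "dbar \<equiv> infdist zbar (frontier H)"
    and "phi_up \<equiv> (INF x\<in>{x\<in>H. cone_le K (g x) 0}. f x + h x)"
    and "phi_low \<equiv> (INF x\<in>H. f x + h x)"
  assumes kappa0_def: "kappa0 = 2 * (Kh + Bf1) * Dh
           + (\<sigma>\<^sup>2 / (2 * (1 - \<sigma>)\<^sup>2) + 2 * ((1 + \<sigma>) / (1 - \<sigma>))) * Dh\<^sup>2 / lam"
    and Rphi_def: "Rphi = phi_up - phi_low + Dh\<^sup>2 / lam"
    and C0_def: "C0 = max (norm (p 0)) kappa0 / (min 1 dbar * \<tau>)"
    and cone: "closed K" "convex_cone K"
    and B1: "H \<noteq> {}" "compact H" "convex H" "convex_on H h"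
       "\<forall>x\<in>H. \<forall>y\<in>H. \<bar>h x - h y\<bar> \<le> Kh * dist x y"
    and B2: "open U" "H \<subseteq> U" "\<forall>x\<in>U. (f has_derivative (\<lambda>d. inner (gradf x) d)) (at x)"
       "mf > 0" "Lf > 0"
       "\<forall>x\<in>H. \<forall>y\<in>H. f y - f x - inner (gradf x) (y - x) \<ge> - (mf / 2) * (norm (y - x))\<^sup>2"
       "\<forall>x\<in>H. \<forall>y\<in>H. norm (gradf y - gradf x) \<le> Lf * norm (y - x)"
    and B3: "K_convex K g" "\<forall>x. (g has_derivative Jg x) (at x)"
       "\<forall>x y. onorm (\<lambda>d. Jg y d - Jg x d) \<le> Lg * norm (y - x)"
    and B4: "zbar \<in> interior H" "0 < \<tau>" "\<tau> \<le> 1" "cone_le K (g zbar) 0"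
       "\<forall>x\<in>H. \<forall>q\<in>Kstar. max (norm (adjoint (Jg x) q)) \<bar>inner q (g zbar)\<bar> \<ge> \<tau> * norm q"
    and inputs: "0 < lam" "lam \<le> 1 / (2 * mf)" "0 < \<sigma>" "\<sigma> \<le> 1 / sqrt 2" "0 < c1"
       "z 0 \<in> H" "0 < \<rho>" "0 < \<eta>"
    and init: "c 1 = c1" "khat 1 = 0"
    and stop_def: "\<forall>j. stop j \<longleftrightarrow>
       (let r = v j + z (j - 1) - z j;
            Lpsi = lam * Lam Lf Lg Bg0 Bg1 (c j) (p (j - 1)) + 1;
            w = (1 / lam) *\<^sub>R (r + Lpsi *\<^sub>R (z j - zhat j));
            ph = closest_point Kstar (p (j - 1) + c j *\<^sub>R g (zhat j));
            qh = (1 / c j) *\<^sub>R (p (j - 1) - ph);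
            wh = w + grad_tL gradf g Jg K (c j) (zhat j) (p (j - 1))
                   - grad_tL gradf g Jg K (c j) (z j) (p (j - 1))
        in norm wh \<le> \<rho> \<and> norm qh \<le> \<eta>)"
    \<comment> \<open>step (1) and the definition of hat z in step (2), for every iteration j that is reached\<close>
    and step1: "\<forall>j\<ge>1. (\<forall>i\<in>{1..<j}. \<not> stop i) \<longrightarrow>
       (let Lpsi = lam * Lam Lf Lg Bg0 Bg1 (c j) (p (j - 1)) + 1 in
          z j \<in> H \<and> 0 \<le> eps j \<and>
          v j \<in> eps_subdiff_on H (eps j)
                 (\<lambda>x. lam * aug_lagr f h g K (c j) x (p (j - 1)) + (norm (x - z (j - 1)))\<^sup>2 / 2) (z j) \<and>
          (norm (v j))\<^sup>2 + 2 * eps j \<le> (\<sigma> / sqrt Lpsi)\<^sup>2 * (norm (v j + z (j - 1) - z j))\<^sup>2)"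
    and step2: "\<forall>j\<ge>1. (\<forall>i\<in>{1..<j}. \<not> stop i) \<longrightarrow>
       (let Lpsi = lam * Lam Lf Lg Bg0 Bg1 (c j) (p (j - 1)) + 1;
            r = v j + z (j - 1) - z j;
            gr = grad_tL gradf g Jg K (c j) (z j) (p (j - 1));
            obj = (\<lambda>u. lam * (inner gr (u - z j) + h u) - inner r (u - z j)
                        + Lpsi / 2 * (norm (u - z j))\<^sup>2)
        in zhat j \<in> H \<and> (\<forall>u\<in>H. obj (zhat j) \<le> obj u))"
    \<comment> \<open>steps (3) and (4), for every iteration j that is reached and does not stop\<close>
    and step34: "\<forall>j\<ge>1. (\<forall>i\<in>{1..j}. \<not> stop i) \<longrightarrow>
       p j = closest_point Kstar (p (j - 1) + c j *\<^sub>R g (z j)) \<and>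
       (if khat j + 1 < j \<and>
           (aug_lagr f h g K (c j) (z (khat j + 1)) (p (khat j + 1)) - aug_lagr f h g K (c j) (z j) (p j))
             / real (j - khat j - 1)
           \<le> lam * (1 - \<sigma>\<^sup>2) * \<rho>\<^sup>2 / (4 * (1 + 2 * \<sigma>)\<^sup>2)
        then c (j + 1) = 2 * c j \<and> khat (j + 1) = j
        else c (j + 1) = c j \<and> khat (j + 1) = khat j)"
    \<comment> \<open>k lies in cycle l and p_k is computed\<close>
    and l: "1 \<le> l"
    and k: "1 \<le> k" "c k = 2 ^ (l - 1) * c1" "\<forall>i\<in>{1..k}. \<not> stop i"
  shows "aug_lagr f h g K (2 ^ (l - 1) * c1) (z k) (p k) \<le> Rphi + phi_low + 4 * C0\<^sup>2 / (2 ^ (l - 1) * c1)"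
proof -
  interpret nl_iapial_slater f gradf h H g Jg K Kh mf Lf Lg Bf1 Bg0 Bg1 Dh lam \<sigma> zbar "min 1 dbar" \<tau>
    unfolding Bf1_def Bg0_def Bg1_def Dh_def dbar_def
    by (rule nl_iapial_slaterI[OF cone B1 B2(4-7) B3 B4(1,2,4) B4(5)[unfolded Kstar_def] inputs(1-4)])
  \<comment> \<open>the stopping test, hat z and the doubling test enter only through c (j + 1) \<in> {c j, 2 c j}\<close>
  have not_stopped: "\<And>i. i \<in> {1..j} \<Longrightarrow> \<not> stop i" if "j \<le> k" for j
    using k(3) that by auto
  have "iterates c p z v eps k"
  proof (rule iteratesI[where z = z, OF inputs(6)])
    fix j assume j: "1 \<le> j" "j < k"
    from step34[rule_format, OF j(1) not_stopped[OF less_imp_le[OF j(2)]]]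
    show "c (Suc j) = 2 * c j \<or> c (Suc j) = c j"
      by (auto split: if_splits)
  next
    fix j assume j: "1 \<le> j" "j \<le> k"
    from step1[rule_format, OF j(1)] step34[rule_format, OF j(1)] not_stopped[OF j(2)]
    show "prox_step (c j) (p (j - 1)) (z (j - 1)) (z j) (v j) (eps j) \<and> p j = multiplier (c j) (p (j - 1)) (z j)"
      by (simp add: prox_step_def Let_def Kstar_def)
  qed (use init(1) inputs(5) in simp)
  have "0 < min 1 dbar * \<tau>" "min 1 dbar * \<tau> \<le> 1"
    using s_pos s_le_one tau_pos B4(3) by (simp_all add: mult_le_one)
  moreover have "\<kappa>\<^sub>0 = kappa0"
    by (simp add: \<kappa>\<^sub>0_def kappa0_def)
  ultimately have "norm (p 0) \<le> C0" "\<kappa>\<^sub>0 \<le> min 1 dbar * \<tau> * C0"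
    unfolding C0_def using mult_left_le[of "min 1 dbar * \<tau>" "norm (p 0)"] by (auto simp: le_divide_eq)
  from iterates_lagrangian_bound[OF \<open>iterates c p z v eps k\<close> k(1) this] show ?thesis
    using k(2) Rphi_def by (simp add: phi_up_def)
qed

end
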